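(* For any embedded rectangle $R=(B,A_1,A_2)$ with $B\subseteq EB^{-1}(1)$ we have $\alpha(R)\le 2^{-2m(R)}$.
   Context: $D$ is a finite domain. Two elements $x=(x_1,x_2)$, $y=(y_1,y_2)$ of $D\times D$ are bidistinct if $x_1\ne y_2$ and $x_2\ne y_1$. $EB:(D\times D)^n\to\{0,1\}$ equals $1$ iff for all $1\le i,j\le n$ the $i$-th and $j$-th pairs are bidistinct; inputs are viewed as functions $[1,n]\to D'$ with $D'=D\times D$. For $A\subseteq[1,n]$, a partial input on $A$ is a function $A\to D'$; for disjoint $A_1,A_2$ and partial inputs $\tau_1,\tau_2$ on them, $\tau_1\tau_2$ is the partial input on $A_1\cup A_2$ agreeing with each. For $B\subseteq D'^{[1,n]}$, $B_A$ is the set of partial inputs on $A$ that agree with some input in $B$. An embedded rectangle is a triple $R=(B,A_1,A_2)$ with $A_1,A_2\subseteq[1,n]$ disjoint and $B\subseteq D'^{[1,n]}$ such that (i) $B_{[1,n]\setminus(A_1\cup A_2)}$ consists of a single partial input $\sigma$ and (ii) whenever $\tau_1\in B_{A_1}$ and $\tau_2\in B_{A_2}$, $\tau_1\tau_2\sigma\in B$. Define $m_j(R)=|A_j|$, $m(R)=\min(m_1(R),m_2(R))$, $\alpha_j(R)=|B_{A_j}|/|D'|^{|A_j|}$, $\alpha(R)=\min(\alpha_1(R),\alpha_2(R))$. *)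

theory Defs
  imports Complex_Main "HOL-Library.FuncSet"
begin

text \<open>Domain D is a finite type 'd; D' = 'd \<times> 'd. Inputs are functions
  [1,n] \<rightarrow> D', represented as extensional functions in PiE; partial inputs on A
  are extensional functions on A.\<close>

definition bidistinct :: "'d \<times> 'd \<Rightarrow> 'd \<times> 'd \<Rightarrow> bool" where
  "bidistinct x y \<longleftrightarrow> fst x \<noteq> snd y \<and> snd x \<noteq> fst y"

definition inputs :: "nat \<Rightarrow> (nat \<Rightarrow> 'd \<times> 'd) set" where
  "inputs n = PiE {1..n} (\<lambda>_. UNIV)"

definition EB :: "nat \<Rightarrow> (nat \<Rightarrow> 'd \<times> 'd) \<Rightarrow> bool" where
  "EB n x \<longleftrightarrow> (\<forall>i\<in>{1..n}. \<forall>j\<in>{1..n}. bidistinct (x i) (x j))"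

definition proj :: "(nat \<Rightarrow> 'a) set \<Rightarrow> nat set \<Rightarrow> (nat \<Rightarrow> 'a) set" where
  "proj B A = (\<lambda>x. restrict x A) ` B"

definition glue :: "nat set \<Rightarrow> nat set \<Rightarrow> (nat \<Rightarrow> 'a) \<Rightarrow> (nat \<Rightarrow> 'a) \<Rightarrow> (nat \<Rightarrow> 'a) \<Rightarrow> nat \<Rightarrow> 'a" where
  "glue A1 A2 t1 t2 s = (\<lambda>i. if i \<in> A1 then t1 i else if i \<in> A2 then t2 i else s i)"

definition embedded_rectangle :: "nat \<Rightarrow> (nat \<Rightarrow> 'd \<times> 'd) set \<Rightarrow> nat set \<Rightarrow> nat set \<Rightarrow> bool" where
  "embedded_rectangle n B A1 A2 \<longleftrightarrow>
     B \<subseteq> inputs n \<and> A1 \<subseteq> {1..n} \<and> A2 \<subseteq> {1..n} \<and> A1 \<inter> A2 = {} \<and>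
     (\<exists>\<sigma>. proj B ({1..n} - (A1 \<union> A2)) = {\<sigma>}) \<and>
     (\<forall>t1\<in>proj B A1. \<forall>t2\<in>proj B A2. \<forall>\<sigma>\<in>proj B ({1..n} - (A1 \<union> A2)).
        glue A1 A2 t1 t2 \<sigma> \<in> B)"

definition alpha_j :: "(nat \<Rightarrow> 'd::finite \<times> 'd) set \<Rightarrow> nat set \<Rightarrow> real" where
  "alpha_j B A = real (card (proj B A)) / real (card (UNIV :: ('d \<times> 'd) set)) ^ card A"

definition alpha_R :: "(nat \<Rightarrow> 'd::finite \<times> 'd) set \<Rightarrow> nat set \<Rightarrow> nat set \<Rightarrow> real" where
  "alpha_R B A1 A2 = min (alpha_j B A1) (alpha_j B A2)"

definition m_R :: "nat set \<Rightarrow> nat set \<Rightarrow> nat" where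
  "m_R A1 A2 = min (card A1) (card A2)"

end

theory Submission
  imports Defs
begin

text \<open>Gluing the part of one input on A1 to the part of another on A2 stays in B, so every
  pair occurring on A1 is bidistinct from every pair occurring on A2: the first coordinates used
  on A1 avoid the second coordinates used on A2, and vice versa. With p_j, q_j the numbers of
  first and second coordinates used on A_j and d = |D|, this gives p_1 + q_2 \<le> d and
  q_1 + p_2 \<le> d, hence (p_1 q_1)(p_2 q_2) \<le> d^4/16 by AM-GM. So some side B_{A_j} lies in
  (P \<times> Q)^{A_j} with |P| |Q| \<le> d^2/4 and has density at most 4^{-|A_j|}.\<close>

definition left_values :: "(nat \<Rightarrow> 'a \<times> 'b) set \<Rightarrow> nat set \<Rightarrow> 'a set" where
  "left_values B A = {fst (x i) |x i. x \<in> B \<and> i \<in> A}"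

definition right_values :: "(nat \<Rightarrow> 'a \<times> 'b) set \<Rightarrow> nat set \<Rightarrow> 'b set" where
  "right_values B A = {snd (x i) |x i. x \<in> B \<and> i \<in> A}"

lemma alpha_j_le_card_power:
  fixes B :: "(nat \<Rightarrow> 'd::finite \<times> 'd) set"
  assumes "finite A" and "\<And>x i. x \<in> B \<Longrightarrow> i \<in> A \<Longrightarrow> x i \<in> S"
  shows "alpha_j B A \<le> (real (card S) / real (card (UNIV :: ('d \<times> 'd) set))) ^ card A"
proof -
  have "proj B A \<subseteq> PiE A (\<lambda>_. S)"
    unfolding proj_def using assms(2) by auto
  then have "card (proj B A) \<le> card (PiE A (\<lambda>_. S))"
    by (intro card_mono) (simp_all add: assms(1) finite_PiE)
  also have "\<dots> = card S ^ card A"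
    using assms(1) by (simp add: card_PiE)
  finally have "real (card (proj B A)) \<le> real (card S) ^ card A"
    by (metis of_nat_le_iff of_nat_power)
  then show ?thesis
    unfolding alpha_j_def power_divide by (simp add: divide_right_mono)
qed

lemma alpha_j_le_values_power:
  fixes B :: "(nat \<Rightarrow> 'd::finite \<times> 'd) set"
  assumes "finite A"
  shows "alpha_j B A \<le>
    (real (card (left_values B A)) * real (card (right_values B A)) / real (card (UNIV :: 'd set)) ^ 2) ^ card A"
proof -
  have "alpha_j B A \<le>
      (real (card (left_values B A \<times> right_values B A)) / real (card (UNIV :: ('d \<times> 'd) set))) ^ card A"
    using assms by (rule alpha_j_le_card_power)
      (force simp: left_values_def right_values_def mem_Times_iff)
  moreover have "card (UNIV :: ('d \<times> 'd) set) = card (UNIV :: 'd set) ^ 2"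
    by (simp add: UNIV_Times_UNIV[symmetric] card_cartesian_product power2_eq_square
        del: UNIV_Times_UNIV)
  ultimately show ?thesis
    by (simp add: card_cartesian_product)
qed

lemma card_add_le_card_UNIV_if_disjoint:
  fixes S T :: "'a::finite set"
  assumes "S \<inter> T = {}"
  shows "card S + card T \<le> card (UNIV :: 'a set)"
  using assms by (simp add: card_Un_disjoint[symmetric] card_mono)

lemma four_mult_le_square_if_add_le:
  fixes x y d :: real
  assumes "0 \<le> x" "0 \<le> y" "x + y \<le> d"
  shows "4 * (x * y) \<le> d\<^sup>2"
proof -
  have "4 * (x * y) = (x + y)\<^sup>2 - (x - y)\<^sup>2"
    by (simp add: power2_eq_square algebra_simps)
  also have "\<dots> \<le> (x + y)\<^sup>2"
    by simp
  also have "\<dots> \<le> d\<^sup>2"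
    using assms by (intro power_mono) auto
  finally show ?thesis .
qed

lemma min_mult_le_quarter_square:
  fixes p q p' q' d :: real
  assumes "0 \<le> p" "0 \<le> q" "0 \<le> p'" "0 \<le> q'" "p + q' \<le> d" "q + p' \<le> d"
  shows "min (p * q) (p' * q') \<le> d\<^sup>2 / 4"
proof (rule ccontr)
  assume "\<not> ?thesis"
  then have "d\<^sup>2 / 4 < p * q" "d\<^sup>2 / 4 < p' * q'"
    by auto
  moreover have "0 \<le> d\<^sup>2 / 4"
    by simp
  ultimately have "(d\<^sup>2 / 4) * (d\<^sup>2 / 4) < (p * q) * (p' * q')"
    by (intro mult_strict_mono) linarith+
  also have "\<dots> = (p * q') * (q * p')"
    by (simp add: mult_ac)
  also have "\<dots> \<le> (d\<^sup>2 / 4) * (d\<^sup>2 / 4)"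
    using four_mult_le_square_if_add_le[of p q' d] four_mult_le_square_if_add_le[of q p' d] assms
    by (intro mult_mono) auto
  finally show False
    by simp
qed

lemma alpha_j_le_quarter_power:
  fixes B :: "(nat \<Rightarrow> 'd::finite \<times> 'd) set"
  assumes "finite A"
    and "real (card (left_values B A)) * real (card (right_values B A)) \<le> real (card (UNIV :: 'd set)) ^ 2 / 4"
  shows "alpha_j B A \<le> (1 / 4) ^ card A"
proof -
  let ?c = "real (card (left_values B A)) * real (card (right_values B A)) / real (card (UNIV :: 'd set)) ^ 2"
  have "?c \<le> 1 / 4"
    using assms(2) by (simp add: divide_le_eq)
  then have "?c ^ card A \<le> (1 / 4) ^ card A"
    by (intro power_mono) simp_all
  then show ?thesis
    using alpha_j_le_values_power[OF assms(1), of B] by linarith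
qed

lemma embedded_rectangle_bidistinct:
  assumes R: "embedded_rectangle n B A1 A2"
    and B: "B \<subseteq> {x \<in> inputs n. EB n x}"
    and "x \<in> B" "y \<in> B" "i \<in> A1" "j \<in> A2"
  shows "bidistinct (x i) (y j)"
proof -
  obtain \<sigma> where \<sigma>: "proj B ({1..n} - (A1 \<union> A2)) = {\<sigma>}"
    using R unfolding embedded_rectangle_def by blast
  let ?z = "glue A1 A2 (restrict x A1) (restrict y A2) \<sigma>"
  have "restrict x A1 \<in> proj B A1" "restrict y A2 \<in> proj B A2"
    using \<open>x \<in> B\<close> \<open>y \<in> B\<close> unfolding proj_def by auto
  then have "?z \<in> B"
    using R \<sigma> unfolding embedded_rectangle_def by auto
  moreover have "i \<in> {1..n}" "j \<in> {1..n}" "j \<notin> A1"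
    using R \<open>i \<in> A1\<close> \<open>j \<in> A2\<close> unfolding embedded_rectangle_def by auto
  ultimately have "bidistinct (?z i) (?z j)"
    using B unfolding EB_def by blast
  then show ?thesis
    using \<open>i \<in> A1\<close> \<open>j \<in> A2\<close> \<open>j \<notin> A1\<close> by (simp add: glue_def)
qed

lemma quarter_power_eq_powr: "(1 / 4 :: real) ^ m = 2 powr (- 2 * real m)"
proof -
  have "(2::real) powr (- 2 * real m) = (2 powr 2) powr (- real m)"
    unfolding powr_powr by simp
  also have "\<dots> = inverse (4 ^ m)"
    by (simp add: powr_minus powr_realpow)
  finally show ?thesis
    by (simp add: power_one_over inverse_eq_divide)
qed

theorem lemma10:
  fixes n :: nat and B :: "(nat \<Rightarrow> 'd::finite \<times> 'd) set" and A1 A2 :: "nat set"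
  assumes "embedded_rectangle n B A1 A2"
    and "B \<subseteq> {x \<in> inputs n. EB n x}"
  shows "alpha_R B A1 A2 \<le> 2 powr (- 2 * real (m_R A1 A2))"
proof -
  have fin: "finite A1" "finite A2"
    using assms(1) finite_subset unfolding embedded_rectangle_def by blast+
  have "left_values B A1 \<inter> right_values B A2 = {}" "right_values B A1 \<inter> left_values B A2 = {}"
    using embedded_rectangle_bidistinct[OF assms]
    unfolding left_values_def right_values_def bidistinct_def by fastforce+
  then have "card (left_values B A1) + card (right_values B A2) \<le> card (UNIV :: 'd set)"
    "card (right_values B A1) + card (left_values B A2) \<le> card (UNIV :: 'd set)"
    by (simp_all add: card_add_le_card_UNIV_if_disjoint)
  then have "min (real (card (left_values B A1)) * real (card (right_values B A1)))
      (real (card (left_values B A2)) * real (card (right_values B A2))) \<le> real (card (UNIV :: 'd set)) ^ 2 / 4"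
    by (intro min_mult_le_quarter_square) simp_all
  then have "alpha_j B A1 \<le> (1 / 4) ^ card A1 \<or> alpha_j B A2 \<le> (1 / 4) ^ card A2"
    using alpha_j_le_quarter_power fin by (metis min_le_iff_disj)
  moreover have "(1 / 4 :: real) ^ card A1 \<le> (1 / 4) ^ m_R A1 A2"
    "(1 / 4 :: real) ^ card A2 \<le> (1 / 4) ^ m_R A1 A2"
    unfolding m_R_def by (simp_all add: power_decreasing)
  ultimately have "alpha_R B A1 A2 \<le> (1 / 4) ^ m_R A1 A2"
    unfolding alpha_R_def by linarith
  then show ?thesis
    by (simp only: quarter_power_eq_powr)
qed

end
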